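(* Let $G$ be a finite simple connected graph and $G^*$ its twin graph. If $\beta(G^* )=n(G^* )-t$ for some positive integer $t$, then $\beta(G)\le n(G)-t$.
   Context: $n(X)$ is the number of vertices of $X$. For an ordered set $W=\{w_1,\dots,w_k\}$ of vertices of a connected graph $X$, $r(v|W)=(d(v,w_1),\dots,d(v,w_k))$ with $d$ the shortest-path distance; $W$ is resolving if distinct vertices have distinct vectors, and $\beta(X)$ is the minimum size of a resolving set. Two distinct vertices $u,v$ of $G$ are twins if $N(v)\setminus\{u\}=N(u)\setminus\{v\}$; $u\equiv v$ iff $u=v$ or they are twins, an equivalence relation with classes $v^*$. The twin graph $G^*$ has vertex set $\{v^*:v\in V(G)\}$ and $u^*v^*\in E(G^* )$ iff $uv\in E(G)$ (well defined). *)

theory Defs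
  imports Main
begin

definition simple_graph :: "'a set \<Rightarrow> ('a \<Rightarrow> 'a \<Rightarrow> bool) \<Rightarrow> bool" where
  "simple_graph V E \<longleftrightarrow> finite V \<and> (\<forall>u v. E u v \<longrightarrow> u \<in> V \<and> v \<in> V)
     \<and> (\<forall>u v. E u v \<longrightarrow> E v u) \<and> (\<forall>u. \<not> E u u)"

fun walk :: "('a \<Rightarrow> 'a \<Rightarrow> bool) \<Rightarrow> 'a list \<Rightarrow> bool" where
  "walk E [] = True"
| "walk E [x] = True"
| "walk E (x # y # xs) = (E x y \<and> walk E (y # xs))"

definition walk_betw :: "'a set \<Rightarrow> ('a \<Rightarrow> 'a \<Rightarrow> bool) \<Rightarrow> 'a \<Rightarrow> 'a list \<Rightarrow> 'a \<Rightarrow> bool" where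
  "walk_betw V E u xs v \<longleftrightarrow> xs \<noteq> [] \<and> hd xs = u \<and> last xs = v \<and> set xs \<subseteq> V \<and> walk E xs"

definition connected_graph :: "'a set \<Rightarrow> ('a \<Rightarrow> 'a \<Rightarrow> bool) \<Rightarrow> bool" where
  "connected_graph V E \<longleftrightarrow> V \<noteq> {} \<and> (\<forall>u\<in>V. \<forall>v\<in>V. \<exists>xs. walk_betw V E u xs v)"

definition gdist :: "'a set \<Rightarrow> ('a \<Rightarrow> 'a \<Rightarrow> bool) \<Rightarrow> 'a \<Rightarrow> 'a \<Rightarrow> nat" where
  "gdist V E u v = (LEAST n. \<exists>xs. walk_betw V E u xs v \<and> length xs = Suc n)"

definition resolving :: "'a set \<Rightarrow> ('a \<Rightarrow> 'a \<Rightarrow> bool) \<Rightarrow> 'a set \<Rightarrow> bool" where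
  "resolving V E W \<longleftrightarrow> W \<subseteq> V \<and>
     (\<forall>u\<in>V. \<forall>v\<in>V. (\<forall>w\<in>W. gdist V E u w = gdist V E v w) \<longrightarrow> u = v)"

definition metric_dim :: "'a set \<Rightarrow> ('a \<Rightarrow> 'a \<Rightarrow> bool) \<Rightarrow> nat" where
  "metric_dim V E = (LEAST k. \<exists>W. resolving V E W \<and> card W = k)"

definition twins :: "'a set \<Rightarrow> ('a \<Rightarrow> 'a \<Rightarrow> bool) \<Rightarrow> 'a \<Rightarrow> 'a \<Rightarrow> bool" where
  "twins V E u v \<longleftrightarrow> u \<noteq> v \<and> {w\<in>V. E v w} - {u} = {w\<in>V. E u w} - {v}"

definition twin_class :: "'a set \<Rightarrow> ('a \<Rightarrow> 'a \<Rightarrow> bool) \<Rightarrow> 'a \<Rightarrow> 'a set" where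
  "twin_class V E v = {u\<in>V. u = v \<or> twins V E u v}"

definition twin_vertices :: "'a set \<Rightarrow> ('a \<Rightarrow> 'a \<Rightarrow> bool) \<Rightarrow> 'a set set" where
  "twin_vertices V E = twin_class V E ` V"

text \<open>Edges of the twin graph: classes u*, v* are adjacent iff uv is an edge of G
(well defined by twin-ness); we keep the twin graph simple (no loops).\<close>
definition twin_edges :: "'a set \<Rightarrow> ('a \<Rightarrow> 'a \<Rightarrow> bool) \<Rightarrow> 'a set \<Rightarrow> 'a set \<Rightarrow> bool" where
  "twin_edges V E X Y \<longleftrightarrow> X \<in> twin_vertices V E \<and> Y \<in> twin_vertices V E \<and> X \<noteq> Y
     \<and> (\<exists>u\<in>X. \<exists>v\<in>Y. E u v)"

end

theory Submission
  imports Defs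
begin

text \<open>Distances between vertices in different twin classes are the same in G and in the twin
graph G*: a walk in G projects to a walk in G* by merging consecutive vertices of one class, and a
walk in G* lifts to G because two distinct adjacent twin classes are completely joined. So if W*
is a metric basis of G* and r picks one vertex of every class, deleting from V the representatives
of the t classes outside W* leaves a resolving set of G: a vertex of this set is separated from
every other vertex by itself, and two deleted vertices lie in distinct classes outside W*, which
are separated by some class in W* and hence by its representative.\<close>

lemma gdist_le_length:
  assumes "walk_betw V E u xs v"
  shows "Suc (gdist V E u v) \<le> length xs"
proof -
  have "xs \<noteq> []" using assms by (simp add: walk_betw_def)
  then have "\<exists>ys. walk_betw V E u ys v \<and> length ys = Suc (length xs - 1)"
    using assms by auto
  then have "gdist V E u v \<le> length xs - 1" unfolding gdist_def by (rule Least_le)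
  with \<open>xs \<noteq> []\<close> show ?thesis by (cases xs) auto
qed

lemma gdist_attained:
  assumes "walk_betw V E u xs v"
  shows "\<exists>ys. walk_betw V E u ys v \<and> length ys = Suc (gdist V E u v)"
proof -
  have "xs \<noteq> []" using assms by (simp add: walk_betw_def)
  then have "\<exists>n ys. walk_betw V E u ys v \<and> length ys = Suc n"
    using assms by (metis Suc_pred length_greater_0_conv)
  then show ?thesis unfolding gdist_def by (rule LeastI_ex)
qed

lemma gdist_eq_0_imp_eq:
  assumes "walk_betw V E u xs v" "gdist V E u v = 0"
  shows "u = v"
proof -
  obtain ys where "walk_betw V E u ys v" "length ys = Suc 0"
    using gdist_attained[OF assms(1)] assms(2) by auto
  then show ?thesis by (cases ys) (auto simp: walk_betw_def)
qed

lemma gdist_self: "u \<in> V \<Longrightarrow> gdist V E u u = 0"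
  using gdist_le_length[of V E u "[u]" u] by (simp add: walk_betw_def)

lemma gdist_eq_0_iff:
  assumes "connected_graph V E" "u \<in> V" "v \<in> V"
  shows "gdist V E u v = 0 \<longleftrightarrow> u = v"
  using assms gdist_eq_0_imp_eq gdist_self unfolding connected_graph_def by metis

lemma resolving_vertex_set:
  assumes "connected_graph V E"
  shows "resolving V E V"
  unfolding resolving_def
  using gdist_eq_0_iff[OF assms] by (metis subset_refl)

lemma metric_dim_le_card: "resolving V E W \<Longrightarrow> metric_dim V E \<le> card W"
  unfolding metric_dim_def by (intro Least_le) blast

lemma metric_dim_attained:
  assumes "resolving V E W"
  shows "\<exists>W'. resolving V E W' \<and> card W' = metric_dim V E"
proof -
  have "\<exists>k W. resolving V E W \<and> card W = k" using assms by blast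
  then show ?thesis unfolding metric_dim_def by (rule LeastI_ex)
qed

lemma twins_iff:
  assumes "simple_graph V E"
  shows "twins V E u v \<longleftrightarrow> u \<noteq> v \<and> (\<forall>x. x \<noteq> u \<and> x \<noteq> v \<longrightarrow> (E u x \<longleftrightarrow> E v x))"
  using assms unfolding twins_def simple_graph_def by (auto simp: set_eq_iff)

lemma twins_sym: "simple_graph V E \<Longrightarrow> twins V E u v \<Longrightarrow> twins V E v u"
  using twins_iff by metis

lemma twins_trans:
  assumes g: "simple_graph V E" and uv: "twins V E u v" and vw: "twins V E v w" and "u \<noteq> w"
  shows "twins V E u w"
proof -
  have sym: "\<And>a b. E a b \<longleftrightarrow> E b a" using g by (auto simp: simple_graph_def)
  have "E u x \<longleftrightarrow> E w x" if "x \<noteq> u" "x \<noteq> w" for x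
  proof (cases "x = v")
    case True
    have "E u v \<longleftrightarrow> E w u" using vw \<open>u \<noteq> w\<close> uv sym twins_iff[OF g] by metis
    also have "\<dots> \<longleftrightarrow> E w v" using uv \<open>u \<noteq> w\<close> vw sym twins_iff[OF g] by metis
    finally show ?thesis using True by simp
  next
    case False
    then show ?thesis using uv vw that twins_iff[OF g] by metis
  qed
  then show ?thesis using twins_iff[OF g] \<open>u \<noteq> w\<close> by blast
qed

lemma mem_twin_class: "a \<in> V \<Longrightarrow> a \<in> twin_class V E a"
  by (simp add: twin_class_def)

lemma twin_vertex_subset: "X \<in> twin_vertices V E \<Longrightarrow> X \<subseteq> V"
  by (auto simp: twin_vertices_def twin_class_def)

lemma some_mem_twin_vertex: "X \<in> twin_vertices V E \<Longrightarrow> (SOME x. x \<in> X) \<in> X"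
  unfolding twin_vertices_def by (auto intro: someI mem_twin_class)

lemma twin_class_eq:
  assumes g: "simple_graph V E" and "x \<in> twin_class V E a"
  shows "twin_class V E x = twin_class V E a"
proof (cases "x = a")
  case False
  then have xa: "twins V E x a" using assms(2) by (simp add: twin_class_def)
  have "y = x \<or> twins V E y x \<longleftrightarrow> y = a \<or> twins V E y a" for y
    using xa twins_sym[OF g] twins_trans[OF g] twins_def by metis
  then show ?thesis unfolding twin_class_def by simp
qed simp

lemma twin_class_of_mem:
  "simple_graph V E \<Longrightarrow> X \<in> twin_vertices V E \<Longrightarrow> x \<in> X \<Longrightarrow> twin_class V E x = X"
  unfolding twin_vertices_def by (auto dest: twin_class_eq)

lemma edge_between_twin_classes:
  assumes g: "simple_graph V E" and "E x y"
    and x': "x' \<in> twin_class V E x" and y': "y' \<in> twin_class V E y"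
    and ne: "twin_class V E x \<noteq> twin_class V E y"
  shows "E x' y'"
proof -
  have sym: "\<And>a b. E a b \<longleftrightarrow> E b a" and irrefl: "\<And>a. \<not> E a a"
    using g by (auto simp: simple_graph_def)
  have "x' \<noteq> y" "y' \<noteq> x'"
    using ne twin_class_eq[OF g x'] twin_class_eq[OF g y'] by metis+
  have "E x' y"
  proof (cases "x' = x")
    case False
    then have "twins V E x' x" using x' by (simp add: twin_class_def)
    then show ?thesis using \<open>E x y\<close> irrefl \<open>x' \<noteq> y\<close> twins_iff[OF g] by metis
  qed (use \<open>E x y\<close> in simp)
  show "E x' y'"
  proof (cases "y' = y")
    case False
    then have "twins V E y' y" using y' by (simp add: twin_class_def)
    then show ?thesis using \<open>E x' y\<close> \<open>x' \<noteq> y\<close> \<open>y' \<noteq> x'\<close> sym twins_iff[OF g] by metis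
  qed (use \<open>E x' y\<close> in simp)
qed

lemma walk_twin_graph_remdups_adj:
  assumes g: "simple_graph V E"
  shows "walk E xs \<Longrightarrow> set xs \<subseteq> V \<Longrightarrow>
    walk (twin_edges V E) (remdups_adj (map (twin_class V E) xs))"
proof (induction xs rule: induct_list012)
  case (3 x y xs)
  let ?f = "twin_class V E"
  have IH: "walk (twin_edges V E) (remdups_adj (map ?f (y # xs)))" using 3 by simp
  show ?case
  proof (cases "?f x = ?f y")
    case False
    obtain r where r: "remdups_adj (?f y # map ?f xs) = ?f y # r"
      by (metis remdups_adj_Cons_alt)
    have x: "x \<in> V" and y: "y \<in> V" using "3.prems"(2) by auto
    then have "twin_edges V E (?f x) (?f y)"
      unfolding twin_edges_def twin_vertices_def
      using False "3.prems"(1) mem_twin_class[OF x] mem_twin_class[OF y] by auto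
    then show ?thesis using IH r False by simp
  qed (use IH in simp)
qed simp_all

lemma walk_betw_twin_graph:
  assumes "simple_graph V E" and "walk_betw V E u xs z"
  shows "walk_betw (twin_vertices V E) (twin_edges V E) (twin_class V E u)
           (remdups_adj (map (twin_class V E) xs)) (twin_class V E z)"
  using assms walk_twin_graph_remdups_adj[OF assms(1), of xs]
  unfolding walk_betw_def twin_vertices_def by (auto simp: hd_map last_map)

lemma walk_lift_from_twin_graph:
  assumes g: "simple_graph V E" and h: "\<And>Y. Y \<in> twin_vertices V E \<Longrightarrow> h Y \<in> Y"
  shows "walk (twin_edges V E) ys \<Longrightarrow> walk E (map h ys)"
proof (induction "twin_edges V E" ys rule: walk.induct)
  case (3 X Y ys)
  then obtain a b where "a \<in> X" "b \<in> Y" "E a b" and X: "X \<in> twin_vertices V E"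
    and Y: "Y \<in> twin_vertices V E" and "X \<noteq> Y"
    unfolding twin_edges_def by auto
  then have "E (h X) (h Y)"
    using edge_between_twin_classes[OF g \<open>E a b\<close>] h twin_class_of_mem[OF g] by metis
  then show ?case using 3 by simp
qed simp_all

lemma connected_twin_graph:
  assumes g: "simple_graph V E" and c: "connected_graph V E"
  shows "connected_graph (twin_vertices V E) (twin_edges V E)"
  unfolding connected_graph_def
proof (intro conjI ballI)
  show "twin_vertices V E \<noteq> {}" using c by (simp add: connected_graph_def twin_vertices_def)
next
  fix X Y assume "X \<in> twin_vertices V E" "Y \<in> twin_vertices V E"
  then obtain a b where "a \<in> V" "b \<in> V" "X = twin_class V E a" "Y = twin_class V E b"
    unfolding twin_vertices_def by blast
  with c show "\<exists>xs. walk_betw (twin_vertices V E) (twin_edges V E) X xs Y"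
    using walk_betw_twin_graph[OF g] unfolding connected_graph_def by blast
qed

lemma gdist_twin_graph:
  assumes g: "simple_graph V E" and c: "connected_graph V E"
    and u: "u \<in> V" and z: "z \<in> V" and ne: "twin_class V E u \<noteq> twin_class V E z"
  shows "gdist V E u z = gdist (twin_vertices V E) (twin_edges V E) (twin_class V E u) (twin_class V E z)"
proof -
  let ?f = "twin_class V E" and ?V = "twin_vertices V E" and ?E = "twin_edges V E"
  obtain xs0 where xs0: "walk_betw V E u xs0 z" using c u z by (auto simp: connected_graph_def)
  obtain xs where xs: "walk_betw V E u xs z" "length xs = Suc (gdist V E u z)"
    using gdist_attained[OF xs0] by blast
  let ?p = "remdups_adj (map ?f xs)"
  have p: "walk_betw ?V ?E (?f u) ?p (?f z)"
    by (rule walk_betw_twin_graph[OF g xs(1)])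
  have le: "gdist ?V ?E (?f u) (?f z) \<le> gdist V E u z"
    using gdist_le_length[OF p] remdups_adj_length[of "map ?f xs"] xs(2) by simp
  obtain ys where ys: "walk_betw ?V ?E (?f u) ys (?f z)"
    "length ys = Suc (gdist ?V ?E (?f u) (?f z))"
    using gdist_attained[OF p] by blast
  define h where "h = (\<lambda>Y. SOME y. y \<in> Y)(?f u := u, ?f z := z)"
  have hY: "h Y \<in> Y" if "Y \<in> ?V" for Y
    using some_mem_twin_vertex[OF that] mem_twin_class[OF u] mem_twin_class[OF z]
    by (simp add: h_def)
  have "h Y \<in> V" if "Y \<in> set ys" for Y
  proof -
    have "Y \<in> ?V" using ys(1) that by (auto simp: walk_betw_def)
    then show ?thesis using hY twin_vertex_subset by blast
  qed
  moreover have "h (?f u) = u" "h (?f z) = z" using ne by (simp_all add: h_def)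
  ultimately have "walk_betw V E u (map h ys) z"
    using ys(1) walk_lift_from_twin_graph[OF g hY]
    unfolding walk_betw_def by (auto simp: hd_map last_map)
  then have "gdist V E u z \<le> gdist ?V ?E (?f u) (?f z)"
    using gdist_le_length ys(2) by (metis length_map Suc_le_mono)
  with le show ?thesis by simp
qed

lemma inj_on_twin_representative:
  assumes "simple_graph V E" and "\<And>X. X \<in> twin_vertices V E \<Longrightarrow> r X \<in> X"
  shows "inj_on r (twin_vertices V E)"
proof (rule inj_onI)
  fix X Y assume "X \<in> twin_vertices V E" "Y \<in> twin_vertices V E" "r X = r Y"
  then show "X = Y" using assms twin_class_of_mem[OF assms(1)] by metis
qed

lemma resolving_from_twin_graph:
  assumes g: "simple_graph V E" and c: "connected_graph V E"
    and Ws: "resolving (twin_vertices V E) (twin_edges V E) Ws"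
    and r: "\<And>X. X \<in> twin_vertices V E \<Longrightarrow> r X \<in> X"
  shows "resolving V E (V - r ` (twin_vertices V E - Ws))"
  unfolding resolving_def
proof (intro conjI ballI impI Diff_subset)
  let ?f = "twin_class V E" and ?V = "twin_vertices V E" and ?E = "twin_edges V E"
  let ?W = "V - r ` (?V - Ws)"
  fix u v assume u: "u \<in> V" and v: "v \<in> V" and d: "\<forall>w\<in>?W. gdist V E u w = gdist V E v w"
  have rV: "r X \<in> V" if "X \<in> ?V" for X
    using r[OF that] twin_vertex_subset[OF that] by blast
  have class_r: "?f (r X) = X" if "X \<in> ?V" for X
    using twin_class_of_mem[OF g that r[OF that]] .
  show "u = v"
  proof (rule ccontr)
    assume "u \<noteq> v"
    have "u \<notin> ?W" "v \<notin> ?W"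
      using d \<open>u \<noteq> v\<close> gdist_eq_0_iff[OF c u v] gdist_eq_0_iff[OF c v u] gdist_self u v
      by metis+
    then obtain X Y where X: "X \<in> ?V - Ws" "u = r X" and Y: "Y \<in> ?V - Ws" "v = r Y"
      using u v by blast
    then have "X \<noteq> Y" using \<open>u \<noteq> v\<close> by blast
    then obtain Z where Z: "Z \<in> Ws" "gdist ?V ?E X Z \<noteq> gdist ?V ?E Y Z"
      using Ws X(1) Y(1) unfolding resolving_def by blast
    have ZV: "Z \<in> ?V" using Z(1) Ws by (auto simp: resolving_def)
    have "r Z \<notin> r ` (?V - Ws)"
      using Z(1) ZV inj_on_twin_representative[OF g r] by (auto dest: inj_onD)
    then have "r Z \<in> ?W" using rV[OF ZV] by blast
    moreover have "gdist V E u (r Z) = gdist ?V ?E X Z"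
      using gdist_twin_graph[OF g c u rV[OF ZV]] X Z(1) class_r ZV by auto
    moreover have "gdist V E v (r Z) = gdist ?V ?E Y Z"
      using gdist_twin_graph[OF g c v rV[OF ZV]] Y Z(1) class_r ZV by auto
    ultimately show False using d Z(2) by metis
  qed
qed

theorem proposition2p8:
  fixes V :: "'a set" and E :: "'a \<Rightarrow> 'a \<Rightarrow> bool" and t :: nat
  assumes "simple_graph V E" and "connected_graph V E" and "0 < t"
    and "int (metric_dim (twin_vertices V E) (twin_edges V E)) = int (card (twin_vertices V E)) - int t"
  shows "int (metric_dim V E) \<le> int (card V) - int t"
proof -
  let ?V = "twin_vertices V E" and ?E = "twin_edges V E"
  obtain Ws where Ws: "resolving ?V ?E Ws" "card Ws = metric_dim ?V ?E"
    using metric_dim_attained resolving_vertex_set connected_twin_graph assms(1,2) by metis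
  define r where "r X = (SOME x. x \<in> X)" for X :: "'a set"
  have r: "r X \<in> X" if "X \<in> ?V" for X
    unfolding r_def using some_mem_twin_vertex[OF that] .
  have "finite V" using assms(1) by (simp add: simple_graph_def)
  have "Ws \<subseteq> ?V" using Ws(1) by (simp add: resolving_def)
  with assms(4) Ws(2) \<open>finite V\<close> have "card (?V - Ws) = t"
    by (simp add: card_Diff_subset card_mono finite_subset twin_vertices_def)
  then have "card (r ` (?V - Ws)) = t"
    using card_image inj_on_subset[OF inj_on_twin_representative[OF assms(1) r]] by blast
  moreover have "r ` (?V - Ws) \<subseteq> V" using r twin_vertex_subset by blast
  ultimately have "card (V - r ` (?V - Ws)) = card V - t" "t \<le> card V"
    using \<open>finite V\<close> by (metis card_Diff_subset finite_subset, metis card_mono)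
  moreover have "metric_dim V E \<le> card (V - r ` (?V - Ws))"
    using metric_dim_le_card resolving_from_twin_graph[OF assms(1,2) Ws(1) r] by blast
  ultimately show ?thesis by simp
qed

end
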